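(* Let $g:[0,1]\to\mathbb{R}$ be continuous with $g(0)=g(1)=0$ and $g(y)>0$ for all $y\in(0,1)$, and let $S$ be the solid obtained by rotating about the $y$-axis the region bounded by the $y$-axis and the curve $x^2=g(y)$, $y\in[0,1]$. Let $$\rho=\frac{\int_0^1 g(1-s^2)\,ds}{\int_0^1 g(s^2)\,ds}$$ be the turn-up number of $S$ with respect to the $y$-axis. Then $\rho=1$ if and only if $$\int_0^{\pi/4}\big[g(\cos^2 t)-g(\sin^2 t)\big]\cos\!\Big(\frac{\pi}{4}+t\Big)\,dt=0.$$
   Context: The turn-up number of a solid with respect to a vertical line is the ratio of the Torricelli drainage times $T=\frac1K\int_0^H A(h)h^{-1/2}\,dh$ (with $A(h)$ the horizontal cross-sectional area at height $h$ and the orifice at the lowest point) for the solid in the two positions obtained by turning it upside down while keeping that line vertical. For the solid $S$ above, with cross-sectional area $\pi g(h)$ at height $h$, these two times are proportional to $\int_0^1 g(s^2)\,ds$ and $\int_0^1 g(1-s^2)\,ds$, giving the displayed formula for $\rho$. *)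

theory Defs
  imports "HOL-Analysis.Analysis"
begin

text \<open>Turn-up number of the solid of revolution S (about the y-axis) bounded by
  the y-axis and x^2 = g(y), 0 <= y <= 1: the ratio of the two Torricelli
  drainage times, which (per the paper) equals the ratio of the integrals below.\<close>
definition turn_up_number :: "(real \<Rightarrow> real) \<Rightarrow> real" where
  "turn_up_number g =
     integral {0..1} (\<lambda>s. g (1 - s\<^sup>2)) / integral {0..1} (\<lambda>s. g (s\<^sup>2))"

end

theory Submission
  imports Defs
begin

text \<open>If \<open>H\<close> is a primitive of a continuous \<open>h\<close>, then \<open>H(sin t) - H(cos t)\<close> rises from
  \<open>-H(1)\<close> to \<open>0\<close> on \<open>[0, pi/4]\<close>, so the integral of \<open>h\<close> over \<open>[0, 1]\<close> equals that of
  \<open>h(sin t) cos t + h(cos t) sin t\<close> over \<open>[0, pi/4]\<close>. Subtracting this identity for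
  \<open>h(s) = g(s^2)\<close> from the one for \<open>h(s) = g(1 - s^2)\<close>, the integrand collapses to
  \<open>(g(cos^2 t) - g(sin^2 t)) (cos t - sin t)\<close>, and \<open>cos t - sin t = sqrt 2 cos(pi/4 + t)\<close>.
  So the integral in the theorem is (numerator - denominator) / sqrt 2 of the turn-up number,
  whose denominator is positive. The boundary values \<open>g 0 = g 1 = 0\<close> are not needed.\<close>

lemma has_real_derivative_integral_upper_comp:
  fixes f :: "real \<Rightarrow> real"
  assumes f: "continuous_on {a..b} f"
    and \<phi>: "(\<phi> has_real_derivative \<phi>') (at t within S)"
    and "\<phi> ` S \<subseteq> {a..b}" and "t \<in> S"
  shows "((\<lambda>t. integral {a..\<phi> t} f) has_real_derivative f (\<phi> t) * \<phi>') (at t within S)"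
proof -
  have "((\<lambda>x. integral {a..x} f) has_real_derivative f (\<phi> t)) (at (\<phi> t) within \<phi> ` S)"
    using integral_has_real_derivative[OF f] assms(3,4)
    by (meson DERIV_subset image_subset_iff)
  from DERIV_image_chain[OF this \<phi>] show ?thesis
    by (simp add: o_def)
qed

lemma has_integral_sin_cos_split:
  fixes h :: "real \<Rightarrow> real"
  assumes h: "continuous_on {0..1} h"
  shows "((\<lambda>t. h (sin t) * cos t + h (cos t) * sin t) has_integral integral {0..1} h) {0..pi/4}"
proof -
  define H where "H x = integral {0..x} h" for x
  have "sin ` {0..pi/4} \<subseteq> {0..1}" "cos ` {0..pi/4} \<subseteq> {0..1}"
    by (auto simp: sin_ge_zero cos_ge_zero)
  then have "((\<lambda>t. H (sin t) - H (cos t)) has_real_derivative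
      h (sin t) * cos t + h (cos t) * sin t) (at t within {0..pi/4})"
    if "t \<in> {0..pi/4}" for t
    unfolding H_def using that
    by (auto intro!: derivative_eq_intros has_real_derivative_integral_upper_comp[OF h])
  then have "((\<lambda>t. h (sin t) * cos t + h (cos t) * sin t) has_integral
      (H (sin (pi/4)) - H (cos (pi/4))) - (H (sin 0) - H (cos 0))) {0..pi/4}"
    by (intro fundamental_theorem_of_calculus)
      (auto simp: has_real_derivative_iff_has_vector_derivative[symmetric])
  then show ?thesis
    by (simp add: H_def sin_45 cos_45)
qed

lemma cos_minus_sin_eq: "cos t - sin t = sqrt 2 * cos (pi/4 + t)"
  by (simp add: cos_add cos_45 sin_45 algebra_simps)

lemma integral_turn_up_difference:
  fixes g :: "real \<Rightarrow> real"
  assumes g: "continuous_on {0..1} g"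
  shows "integral {0..pi/4} (\<lambda>t. (g ((cos t)\<^sup>2) - g ((sin t)\<^sup>2)) * cos (pi/4 + t)) =
    (integral {0..1} (\<lambda>s. g (1 - s\<^sup>2)) - integral {0..1} (\<lambda>s. g (s\<^sup>2))) / sqrt 2"
proof -
  have "continuous_on {0..1} (\<lambda>s. g (1 - s\<^sup>2))" "continuous_on {0..1} (\<lambda>s. g (s\<^sup>2))"
    by (auto intro!: continuous_on_compose2[OF g] continuous_intros simp: power_le_one)
  note split_diff = has_integral_diff[OF this[THEN has_integral_sin_cos_split]]
  have "g (1 - (sin t)\<^sup>2) * cos t + g (1 - (cos t)\<^sup>2) * sin t
      - (g ((sin t)\<^sup>2) * cos t + g ((cos t)\<^sup>2) * sin t)
      = (g ((cos t)\<^sup>2) - g ((sin t)\<^sup>2)) * (cos t - sin t)" for t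
    by (simp flip: sin_squared_eq cos_squared_eq) (simp add: algebra_simps)
  with split_diff
  have "((\<lambda>t. sqrt 2 * ((g ((cos t)\<^sup>2) - g ((sin t)\<^sup>2)) * cos (pi/4 + t))) has_integral
      integral {0..1} (\<lambda>s. g (1 - s\<^sup>2)) - integral {0..1} (\<lambda>s. g (s\<^sup>2))) {0..pi/4}"
    by (simp add: cos_minus_sin_eq mult.left_commute)
  from has_integral_cmul[OF this, of "1 / sqrt 2"] show ?thesis
    by (simp add: integral_unique)
qed

lemma integral_comp_square_pos:
  fixes g :: "real \<Rightarrow> real"
  assumes g: "continuous_on {0..1} g" and pos: "\<And>y. 0 < y \<Longrightarrow> y < 1 \<Longrightarrow> g y > 0"
  shows "integral {0..1} (\<lambda>s. g (s\<^sup>2)) > 0"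
proof -
  have "integral {0..1} (\<lambda>_::real. 0::real) < integral {0..1} (\<lambda>s. g (s\<^sup>2))"
    by (rule integral_less_real)
      (auto intro!: continuous_on_compose2[OF g] continuous_intros pos
        simp: power_le_one power_less_one_iff)
  then show ?thesis
    by simp
qed

theorem theorem4:
  fixes g :: "real \<Rightarrow> real"
  assumes cont: "continuous_on {0..1} g"
    and g0: "g 0 = 0" and g1: "g 1 = 0"
    and pos: "\<And>y. 0 < y \<Longrightarrow> y < 1 \<Longrightarrow> g y > 0"
  shows "turn_up_number g = 1 \<longleftrightarrow>
    integral {0..pi/4} (\<lambda>t. (g ((cos t)\<^sup>2) - g ((sin t)\<^sup>2)) * cos (pi/4 + t)) = 0"
  using integral_comp_square_pos[OF cont pos]
  by (auto simp: turn_up_number_def integral_turn_up_difference[OF cont])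

end
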